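(* Let $P$ be a finite poset with unique minimal element $x_0$ and $Q$ a non-empty poset ideal of $P$. Then for any field $k$, $\tilde H^i(\Delta((P\uplus Q)\setminus\{x_0^\ast\});k)=0$ for all $i\in\mathbb{Z}$.
   Context: $\Delta(\cdot)$ denotes the order complex (simplicial complex of chains) and $\tilde H^i$ reduced simplicial cohomology. A poset ideal $Q$ of $P$ is a subset with $x\in Q$, $y<x$ implying $y\in Q$. The poset $P\uplus Q$ has underlying set $P\cup Q^\ast$, $Q^\ast=\{x^\ast:x\in Q\}$ a disjoint copy of $Q$, with $\alpha<\beta$ iff either $\alpha,\beta\in P$ and $\alpha<\beta$ in $P$; or $\alpha=x^\ast,\beta=y^\ast$ with $x<y$ in $P$; or $\alpha=x^\ast$ with $x\in Q$, $\beta\in P$ and $x\le\beta$ in $P$. *)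

theory Defs
  imports Main
begin

definition strict :: "('a \<times> 'a) set \<Rightarrow> 'a \<Rightarrow> 'a \<Rightarrow> bool" where
  "strict le x y \<longleftrightarrow> (x, y) \<in> le \<and> x \<noteq> y"

definition minimal_elem :: "'a set \<Rightarrow> ('a \<times> 'a) set \<Rightarrow> 'a \<Rightarrow> bool" where
  "minimal_elem A le x \<longleftrightarrow> x \<in> A \<and> \<not> (\<exists>y\<in>A. strict le y x)"

definition poset_ideal :: "'a set \<Rightarrow> ('a \<times> 'a) set \<Rightarrow> 'a set \<Rightarrow> bool" where
  "poset_ideal A le Q \<longleftrightarrow> Q \<subseteq> A \<and> (\<forall>x\<in>Q. \<forall>y\<in>A. strict le y x \<longrightarrow> y \<in> Q)"

text \<open>The poset P \<uplus> Q: elements Inl x (x in P) and Inr x (the copy x* of x in Q),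
  given by its strict order relation.\<close>
definition uplus_carrier :: "'a set \<Rightarrow> 'a set \<Rightarrow> ('a + 'a) set" where
  "uplus_carrier P Q = Inl ` P \<union> Inr ` Q"

fun uplus_less :: "('a \<times> 'a) set \<Rightarrow> 'a + 'a \<Rightarrow> 'a + 'a \<Rightarrow> bool" where
  "uplus_less le (Inl x) (Inl y) = strict le x y"
| "uplus_less le (Inr x) (Inr y) = strict le x y"
| "uplus_less le (Inr x) (Inl y) = ((x, y) \<in> le)"
| "uplus_less le (Inl x) (Inr y) = False"

text \<open>The empty chain is the (-1)-simplex (augmented complex, for reduced cohomology).\<close>
definition oc_simplex :: "'a set \<Rightarrow> ('a \<Rightarrow> 'a \<Rightarrow> bool) \<Rightarrow> int \<Rightarrow> 'a list \<Rightarrow> bool" where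
  "oc_simplex A lt i \<sigma> \<longleftrightarrow> sorted_wrt lt \<sigma> \<and> set \<sigma> \<subseteq> A \<and> int (length \<sigma>) = i + 1"

definition coboundary :: "('a list \<Rightarrow> 'k::field) \<Rightarrow> 'a list \<Rightarrow> 'k" where
  "coboundary f \<sigma> = (\<Sum>j<length \<sigma>. (-1) ^ j * f (take j \<sigma> @ drop (Suc j) \<sigma>))"

definition is_cocycle :: "'a set \<Rightarrow> ('a \<Rightarrow> 'a \<Rightarrow> bool) \<Rightarrow> int \<Rightarrow> ('a list \<Rightarrow> 'k::field) \<Rightarrow> bool" where
  "is_cocycle A lt i f \<longleftrightarrow> (\<forall>\<sigma>. oc_simplex A lt (i + 1) \<sigma> \<longrightarrow> coboundary f \<sigma> = 0)"

definition is_coboundary :: "'a set \<Rightarrow> ('a \<Rightarrow> 'a \<Rightarrow> bool) \<Rightarrow> int \<Rightarrow> ('a list \<Rightarrow> 'k::field) \<Rightarrow> bool" where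
  "is_coboundary A lt i f \<longleftrightarrow> (\<exists>g. \<forall>\<sigma>. oc_simplex A lt i \<sigma> \<longrightarrow> f \<sigma> = coboundary g \<sigma>)"

text \<open>\<tilde>H^i(\<Delta>(A,lt); k) = 0, i.e. every reduced i-cocycle with coefficients in k is a coboundary.
  The field k is given by the type 'k.\<close>
definition reduced_cohomology_vanishes ::
  "'k::field itself \<Rightarrow> 'a set \<Rightarrow> ('a \<Rightarrow> 'a \<Rightarrow> bool) \<Rightarrow> int \<Rightarrow> bool" where
  "reduced_cohomology_vanishes _ A lt i \<longleftrightarrow>
     (\<forall>f :: 'a list \<Rightarrow> 'k. is_cocycle A lt i f \<longrightarrow> is_coboundary A lt i f)"

end

theory Submission
  imports Defs
begin

(* A poset with a least element has a cone as order complex, so its reduced cohomology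
   vanishes.  Deleting an up beat point a (one whose strict up-set has a least element b)
   preserves vanishing: once a cocycle has been corrected to vanish on chains avoiding a,
   it is the coboundary of the cochain that sends a chain through a but not b to the
   signed value on the same chain with b inserted right after a.  In (P \<uplus> Q) - {x0*},
   for x maximal among the remaining starred elements, x* is an up beat point covered
   by x; removing the starred elements one by one leaves P, whose least element is x0. *)

definition face :: "nat \<Rightarrow> 'a list \<Rightarrow> 'a list" where
  "face j \<sigma> = take j \<sigma> @ drop (Suc j) \<sigma>"

lemma face_Cons_0 [simp]: "face 0 (x # xs) = xs"
  by (simp add: face_def)

lemma face_Cons_Suc [simp]: "face (Suc j) (x # xs) = x # face j xs"
  by (simp add: face_def)

lemma set_face_subset: "set (face j xs) \<subseteq> set xs"
  unfolding face_def using set_take_subset set_drop_subset by fastforce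

lemma length_face: "j < length xs \<Longrightarrow> length (face j xs) = length xs - 1"
  by (simp add: face_def)

lemma face_append_Cons:
  "face j (\<alpha> @ a # \<beta>) =
    (if j < length \<alpha> then face j \<alpha> @ a # \<beta>
     else if j = length \<alpha> then \<alpha> @ \<beta>
     else \<alpha> @ a # face (j - length \<alpha> - 1) \<beta>)"
proof -
  consider "j < length \<alpha>" | "j = length \<alpha>" | d where "j = length \<alpha> + Suc d"
    by (metis add_Suc_right less_imp_Suc_add linorder_neqE_nat)
  then show ?thesis by cases (simp_all add: face_def)
qed

lemma coboundary_faces: "coboundary f \<sigma> = (\<Sum>j<length \<sigma>. (-1) ^ j * f (face j \<sigma>))"
  by (simp add: coboundary_def face_def)

lemma coboundary_Nil [simp]: "coboundary f [] = 0"
  by (simp add: coboundary_def)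

lemma coboundary_Cons: "coboundary f (x # xs) = f xs - coboundary (\<lambda>ys. f (x # ys)) xs"
  unfolding coboundary_def length_Cons sum.lessThan_Suc_shift
  by (simp add: sum_negf[symmetric])

lemma coboundary_add: "coboundary (\<lambda>\<rho>. f \<rho> + g \<rho>) \<sigma> = coboundary f \<sigma> + coboundary g \<sigma>"
  by (simp add: coboundary_def distrib_left sum.distrib)

lemma coboundary_diff: "coboundary (\<lambda>\<rho>. f \<rho> - g \<rho>) \<sigma> = coboundary f \<sigma> - coboundary g \<sigma>"
  by (simp add: coboundary_def right_diff_distrib sum_subtractf)

lemma coboundary_coboundary: "coboundary (coboundary f) \<sigma> = 0"
proof (induction \<sigma> arbitrary: f)
  case Nil
  then show ?case by simp
next
  case (Cons x xs)
  have "(\<lambda>ys. coboundary f (x # ys)) = (\<lambda>ys. f ys - coboundary (\<lambda>zs. f (x # zs)) ys)"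
    by (simp add: coboundary_Cons)
  then show ?case
    by (simp only: coboundary_Cons[of "coboundary f"] coboundary_diff Cons.IH) simp
qed

lemma coboundary_cong:
  "(\<And>j. j < length \<sigma> \<Longrightarrow> f (face j \<sigma>) = g (face j \<sigma>)) \<Longrightarrow> coboundary f \<sigma> = coboundary g \<sigma>"
  by (simp add: coboundary_faces)

lemma coboundary_eq_0:
  "(\<And>j. j < length \<sigma> \<Longrightarrow> f (face j \<sigma>) = 0) \<Longrightarrow> coboundary f \<sigma> = 0"
  by (simp add: coboundary_faces)

lemma sum_lessThan_add:
  "(\<Sum>j<n + (m::nat). F j) = (\<Sum>j<n. F j) + (\<Sum>j<m. F (n + j) :: 'b::comm_monoid_add)"
  by (induction m) (simp_all add: add.assoc)

lemma coboundary_append_Cons: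
  "coboundary f (\<alpha> @ a # \<beta>) =
     (\<Sum>j<length \<alpha>. (-1) ^ j * f (face j \<alpha> @ a # \<beta>))
   + (-1) ^ length \<alpha> * f (\<alpha> @ \<beta>)
   + (\<Sum>j<length \<beta>. (-1) ^ (length \<alpha> + 1 + j) * f (\<alpha> @ a # face j \<beta>))"
proof -
  let ?g = "\<lambda>j. (-1) ^ j * f (face j (\<alpha> @ a # \<beta>))"
  have "coboundary f (\<alpha> @ a # \<beta>) = (\<Sum>j<length \<alpha> + Suc (length \<beta>). ?g j)"
    by (simp add: coboundary_faces)
  also have "\<dots> = (\<Sum>j<length \<alpha>. ?g j) + (\<Sum>j<Suc (length \<beta>). ?g (length \<alpha> + j))"
    by (rule sum_lessThan_add)
  also have "(\<Sum>j<length \<alpha>. ?g j) = (\<Sum>j<length \<alpha>. (-1) ^ j * f (face j \<alpha> @ a # \<beta>))"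
    by (rule sum.cong) (auto simp: face_append_Cons)
  also have "(\<Sum>j<Suc (length \<beta>). ?g (length \<alpha> + j))
     = (-1) ^ length \<alpha> * f (\<alpha> @ \<beta>)
       + (\<Sum>j<length \<beta>. (-1) ^ (length \<alpha> + 1 + j) * f (\<alpha> @ a # face j \<beta>))"
    unfolding sum.lessThan_Suc_shift by (simp add: face_append_Cons)
  finally show ?thesis by (simp add: add.assoc)
qed

definition beat_cochain :: "'a \<Rightarrow> 'a \<Rightarrow> ('a list \<Rightarrow> 'k::field) \<Rightarrow> 'a list \<Rightarrow> 'k" where
  "beat_cochain a b \<phi> \<rho> =
    (if a \<in> set \<rho> \<and> b \<notin> set \<rho> then
       let \<alpha> = takeWhile (\<lambda>x. x \<noteq> a) \<rho>; \<beta> = tl (dropWhile (\<lambda>x. x \<noteq> a) \<rho>)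
       in (-1) ^ (length \<alpha> + 1) * \<phi> (\<alpha> @ a # b # \<beta>)
     else 0)"

lemma beat_cochain_append_Cons:
  assumes "a \<notin> set \<alpha>" "b \<notin> set \<alpha>" "b \<notin> set \<beta>" "b \<noteq> a"
  shows "beat_cochain a b \<phi> (\<alpha> @ a # \<beta>) = (-1) ^ (length \<alpha> + 1) * \<phi> (\<alpha> @ a # b # \<beta>)"
  using assms by (simp add: beat_cochain_def takeWhile_append dropWhile_append)

lemma beat_cochain_eq_0: "a \<notin> set \<rho> \<or> b \<in> set \<rho> \<Longrightarrow> beat_cochain a b \<phi> \<rho> = 0"
  by (auto simp: beat_cochain_def)

lemma coboundary_beat_cochain_through_cover:
  assumes "a \<notin> set \<alpha>" "b \<notin> set \<alpha>" "a \<notin> set \<gamma>" "b \<notin> set \<gamma>" "b \<noteq> a"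
  shows "coboundary (beat_cochain a b \<phi>) (\<alpha> @ a # b # \<gamma>) = \<phi> (\<alpha> @ a # b # \<gamma>)"
  using assms beat_cochain_append_Cons[of a \<alpha> b \<gamma> \<phi>]
  unfolding coboundary_append_Cons length_Cons sum.lessThan_Suc_shift
  by (simp add: beat_cochain_eq_0 mult.assoc[symmetric])

lemma coboundary_beat_cochain_avoiding_cover:
  assumes a: "a \<notin> set \<alpha>" "a \<notin> set \<beta>" and b: "b \<notin> set \<alpha>" "b \<notin> set \<beta>" "b \<noteq> a"
    and cocycle: "coboundary \<phi> (\<alpha> @ a # b # \<beta>) = 0"
    and off_a: "\<phi> (\<alpha> @ b # \<beta>) = 0"
  shows "coboundary (beat_cochain a b \<phi>) (\<alpha> @ a # \<beta>) = \<phi> (\<alpha> @ a # \<beta>)"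
proof -
  define k where "k = length \<alpha>"
  define S where "S = (\<Sum>j<k. (-1) ^ j * \<phi> (face j \<alpha> @ a # b # \<beta>))"
  define T where "T = (\<Sum>j<length \<beta>. (-1) ^ j * \<phi> (\<alpha> @ a # b # face j \<beta>))"
  \<comment> \<open>Among the faces of \<alpha> @ a # b # \<beta>, only \<alpha> @ a # \<beta> omits b and only \<alpha> @ b # \<beta> omits a.\<close>
  have "0 = S + (-1) ^ (k + 1) * \<phi> (\<alpha> @ a # \<beta>) + (-1) ^ k * T"
    using cocycle unfolding coboundary_append_Cons length_Cons sum.lessThan_Suc_shift
    by (simp add: off_a S_def T_def k_def sum_distrib_left power_add mult.assoc) (simp add: algebra_simps)
  then have "(-1) ^ k * \<phi> (\<alpha> @ a # \<beta>) = S + (-1) ^ k * T"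
    by (simp add: algebra_simps)
  then have \<phi>_eq: "\<phi> (\<alpha> @ a # \<beta>) = (-1) ^ k * S + T"
    by (metis distrib_left left_minus_one_mult_self)
  have "(\<Sum>j<k. (-1) ^ j * beat_cochain a b \<phi> (face j \<alpha> @ a # \<beta>)) = (-1) ^ k * S"
    unfolding S_def sum_distrib_left
  proof (rule sum.cong)
    fix j assume "j \<in> {..<k}"
    then have "length (face j \<alpha>) + 1 = k"
      using length_face[of j \<alpha>] k_def by simp
    moreover have "a \<notin> set (face j \<alpha>)" "b \<notin> set (face j \<alpha>)"
      using set_face_subset[of j \<alpha>] a b by auto
    ultimately show "(-1) ^ j * beat_cochain a b \<phi> (face j \<alpha> @ a # \<beta>)
        = (-1) ^ k * ((-1) ^ j * \<phi> (face j \<alpha> @ a # b # \<beta>))"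
      using b by (simp add: beat_cochain_append_Cons)
  qed simp
  moreover have "(\<Sum>j<length \<beta>. (-1) ^ (k + 1 + j) * beat_cochain a b \<phi> (\<alpha> @ a # face j \<beta>)) = T"
    unfolding T_def
  proof (rule sum.cong)
    fix j
    have "b \<notin> set (face j \<beta>)"
      using set_face_subset[of j \<beta>] b by auto
    then show "(-1) ^ (k + 1 + j) * beat_cochain a b \<phi> (\<alpha> @ a # face j \<beta>)
        = (-1) ^ j * \<phi> (\<alpha> @ a # b # face j \<beta>)"
      using a b by (simp add: beat_cochain_append_Cons k_def power_add mult.assoc[symmetric])
  qed simp
  moreover have "beat_cochain a b \<phi> (\<alpha> @ \<beta>) = 0"
    using a by (simp add: beat_cochain_eq_0)
  ultimately show ?thesis
    unfolding coboundary_append_Cons \<phi>_eq k_def by simp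
qed

lemma cohomology_vanishes_cone:
  assumes m: "m \<in> A" and above: "\<forall>x\<in>A. x \<noteq> m \<longrightarrow> lt m x" and not_below: "\<forall>x\<in>A. \<not> lt x m"
  shows "reduced_cohomology_vanishes TYPE('k::field) A lt i"
  unfolding reduced_cohomology_vanishes_def
proof (intro allI impI)
  fix f :: "'a list \<Rightarrow> 'k" assume cocycle: "is_cocycle A lt i f"
  define g where "g \<rho> = (if m \<in> set \<rho> then 0 else f (m # \<rho>))" for \<rho>
  show "is_coboundary A lt i f"
    unfolding is_coboundary_def
  proof (intro exI allI impI)
    fix \<sigma> assume \<sigma>: "oc_simplex A lt i \<sigma>"
    show "f \<sigma> = coboundary g \<sigma>"
    proof (cases "m \<in> set \<sigma>")
      case False
      have "coboundary g \<sigma> = coboundary (\<lambda>\<rho>. f (m # \<rho>)) \<sigma>"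
        by (rule coboundary_cong) (use False set_face_subset in \<open>fastforce simp: g_def\<close>)
      moreover have "oc_simplex A lt (i + 1) (m # \<sigma>)"
        using \<sigma> False above m unfolding oc_simplex_def by auto
      then have "coboundary f (m # \<sigma>) = 0"
        using cocycle unfolding is_cocycle_def by blast
      ultimately show ?thesis by (simp add: coboundary_Cons)
    next
      case True
      then obtain \<alpha> \<beta> where split: "\<sigma> = \<alpha> @ m # \<beta>"
        by (meson split_list)
      have "\<alpha> = []" and "m \<notin> set \<beta>"
        using \<sigma> not_below m unfolding split oc_simplex_def
        by (cases \<alpha>; auto simp: sorted_wrt_append)+
      moreover have "(\<lambda>\<rho>. g (m # \<rho>)) = (\<lambda>_. 0)"
        by (simp add: g_def)
      ultimately show ?thesis
        using split by (simp add: coboundary_Cons coboundary_eq_0 g_def)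
    qed
  qed
qed

definition up_beat :: "'a set \<Rightarrow> ('a \<Rightarrow> 'a \<Rightarrow> bool) \<Rightarrow> 'a \<Rightarrow> 'a \<Rightarrow> bool" where
  "up_beat A lt a b \<longleftrightarrow> a \<in> A \<and> b \<in> A \<and> lt a b \<and> (\<forall>c\<in>A. lt a c \<longrightarrow> c = b \<or> lt b c)"

context
  fixes A :: "'a set" and lt :: "'a \<Rightarrow> 'a \<Rightarrow> bool" and a b :: 'a
  assumes beat: "up_beat A lt a b" and trans: "transp_on A lt" and irrefl: "irreflp_on A lt"
begin

lemma up_beat_not_in_chain:
  assumes "sorted_wrt lt (\<alpha> @ a # \<beta>)" "set (\<alpha> @ a # \<beta>) \<subseteq> A"
  shows "a \<notin> set \<alpha>" "a \<notin> set \<beta>" "b \<notin> set \<alpha>" "b \<noteq> a"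
proof -
  have ab: "a \<in> A" "b \<in> A" "lt a b"
    using beat by (auto simp: up_beat_def)
  show "a \<notin> set \<alpha>" "a \<notin> set \<beta>" "b \<noteq> a"
    using assms ab irreflp_onD[OF irrefl] by (auto simp: sorted_wrt_append)
  show "b \<notin> set \<alpha>"
    using assms ab irreflp_onD[OF irrefl] transp_onD[OF trans, of a b a]
    by (auto simp: sorted_wrt_append)
qed

lemma sorted_wrt_insert_up_beat:
  assumes "sorted_wrt lt (\<alpha> @ a # \<beta>)" "set (\<alpha> @ a # \<beta>) \<subseteq> A" "b \<notin> set \<beta>"
  shows "sorted_wrt lt (\<alpha> @ a # b # \<beta>)"
proof -
  have ab: "a \<in> A" "b \<in> A" "lt a b" and cover: "\<forall>c\<in>A. lt a c \<longrightarrow> c = b \<or> lt b c"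
    using beat by (auto simp: up_beat_def)
  have "lt x b" if "x \<in> set \<alpha>" for x
    using that assms ab transp_onD[OF trans, of x a b] by (auto simp: sorted_wrt_append)
  moreover have "lt b y" if "y \<in> set \<beta>" for y
    using that assms cover by (auto simp: sorted_wrt_append)
  ultimately show ?thesis
    using assms ab by (auto simp: sorted_wrt_append)
qed

lemma up_beat_cover_follows:
  assumes "sorted_wrt lt (\<alpha> @ a # \<beta>)" "set (\<alpha> @ a # \<beta>) \<subseteq> A" "b \<in> set \<beta>"
  obtains \<gamma> where "\<beta> = b # \<gamma>" "b \<notin> set \<gamma>"
proof (cases \<beta>)
  case (Cons y \<gamma>)
  have "b \<in> A" and cover: "\<forall>c\<in>A. lt a c \<longrightarrow> c = b \<or> lt b c"
    using beat by (auto simp: up_beat_def)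
  have "y = b"
  proof (rule ccontr)
    assume "y \<noteq> b"
    then have "lt y b" "lt b y" "y \<in> A"
      using assms cover Cons by (auto simp: sorted_wrt_append)
    then show False
      using \<open>b \<in> A\<close> irreflp_onD[OF irrefl] transp_onD[OF trans, of y b y] by blast
  qed
  moreover have "b \<notin> set \<gamma>"
    using assms Cons \<open>y = b\<close> \<open>b \<in> A\<close> irreflp_onD[OF irrefl] by (auto simp: sorted_wrt_append)
  ultimately show thesis
    using that Cons by blast
qed (use assms in simp)

lemma is_coboundary_if_vanishes_off_up_beat:
  fixes \<phi> :: "'a list \<Rightarrow> 'k::field"
  assumes cocycle: "is_cocycle A lt i \<phi>"
    and off_a: "\<And>\<sigma>. oc_simplex A lt i \<sigma> \<Longrightarrow> a \<notin> set \<sigma> \<Longrightarrow> \<phi> \<sigma> = 0"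
  shows "is_coboundary A lt i \<phi>"
  unfolding is_coboundary_def
proof (intro exI allI impI)
  fix \<sigma> assume \<sigma>: "oc_simplex A lt i \<sigma>"
  show "\<phi> \<sigma> = coboundary (beat_cochain a b \<phi>) \<sigma>"
  proof (cases "a \<in> set \<sigma>")
    case False
    then show ?thesis
      using \<sigma> off_a set_face_subset
      by (metis beat_cochain_eq_0 coboundary_eq_0 subsetD)
  next
    case True
    then obtain \<alpha> \<beta> where split: "\<sigma> = \<alpha> @ a # \<beta>"
      by (meson split_list)
    have chain: "sorted_wrt lt (\<alpha> @ a # \<beta>)" "set (\<alpha> @ a # \<beta>) \<subseteq> A"
      using \<sigma> split by (auto simp: oc_simplex_def)
    note avoid = up_beat_not_in_chain[OF chain]
    show ?thesis
    proof (cases "b \<in> set \<beta>")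
      case True
      with chain obtain \<gamma> where "\<beta> = b # \<gamma>" "b \<notin> set \<gamma>"
        by (rule up_beat_cover_follows)
      then show ?thesis
        using avoid split by (simp add: coboundary_beat_cochain_through_cover)
    next
      case False
      have "b \<in> A"
        using beat by (simp add: up_beat_def)
      have "oc_simplex A lt (i + 1) (\<alpha> @ a # b # \<beta>)"
        using \<sigma> split sorted_wrt_insert_up_beat[OF chain False] \<open>b \<in> A\<close>
        by (auto simp: oc_simplex_def)
      then have "coboundary \<phi> (\<alpha> @ a # b # \<beta>) = 0"
        using cocycle by (simp add: is_cocycle_def)
      moreover have "oc_simplex A lt i (\<alpha> @ b # \<beta>)"
        using \<sigma> split \<open>b \<in> A\<close> sorted_wrt_insert_up_beat[OF chain False]
        by (auto simp: oc_simplex_def sorted_wrt_append)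
      then have "\<phi> (\<alpha> @ b # \<beta>) = 0"
        using off_a avoid by simp
      ultimately show ?thesis
        using avoid False split by (simp add: coboundary_beat_cochain_avoiding_cover)
    qed
  qed
qed

lemma cohomology_vanishes_remove_up_beat:
  assumes "reduced_cohomology_vanishes TYPE('k::field) (A - {a}) lt i"
  shows "reduced_cohomology_vanishes TYPE('k) A lt i"
  unfolding reduced_cohomology_vanishes_def
proof (intro allI impI)
  fix \<phi> :: "'a list \<Rightarrow> 'k" assume cocycle: "is_cocycle A lt i \<phi>"
  then have "is_cocycle (A - {a}) lt i \<phi>"
    by (auto simp: is_cocycle_def oc_simplex_def)
  then obtain \<psi> where \<psi>: "\<And>\<sigma>. oc_simplex (A - {a}) lt i \<sigma> \<Longrightarrow> \<phi> \<sigma> = coboundary \<psi> \<sigma>"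
    using assms unfolding reduced_cohomology_vanishes_def is_coboundary_def by blast
  have "is_coboundary A lt i (\<lambda>\<sigma>. \<phi> \<sigma> - coboundary \<psi> \<sigma>)"
  proof (rule is_coboundary_if_vanishes_off_up_beat)
    show "is_cocycle A lt i (\<lambda>\<sigma>. \<phi> \<sigma> - coboundary \<psi> \<sigma>)"
      using cocycle by (simp add: is_cocycle_def coboundary_diff coboundary_coboundary)
    show "\<phi> \<sigma> - coboundary \<psi> \<sigma> = 0" if "oc_simplex A lt i \<sigma>" "a \<notin> set \<sigma>" for \<sigma>
      using that \<psi> by (auto simp: oc_simplex_def)
  qed
  then obtain g where "\<And>\<sigma>. oc_simplex A lt i \<sigma> \<Longrightarrow> \<phi> \<sigma> - coboundary \<psi> \<sigma> = coboundary g \<sigma>"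
    by (auto simp: is_coboundary_def)
  then show "is_coboundary A lt i \<phi>"
    unfolding is_coboundary_def
    by (metis (no_types) coboundary_add diff_eq_eq)
qed

end

lemma uplus_less_irreflp: "irreflp (uplus_less le)"
proof (rule irreflpI)
  fix u :: "'a + 'a"
  show "\<not> uplus_less le u u"
    by (cases u) (simp_all add: strict_def)
qed

lemma uplus_less_transp:
  assumes "trans le" "antisym le"
  shows "transp (uplus_less le)"
proof (rule transpI)
  fix u v w :: "'a + 'a"
  assume "uplus_less le u v" "uplus_less le v w"
  then show "uplus_less le u w"
    using assms by (cases u; cases v; cases w) (auto simp: strict_def dest: transD antisymD)
qed

lemma partial_order_on_finite_has_minimal:
  assumes "finite P" "partial_order_on P le" "S \<subseteq> P" "S \<noteq> {}"
  obtains x where "x \<in> S" "\<forall>y\<in>S. \<not> strict le y x"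
proof -
  have "finite le"
    using assms(1,2) finite_subset[of le "P \<times> P"] by (auto simp: partial_order_on_def preorder_on_def)
  then have "wf (le - Id)"
    using assms(2) by (rule partial_order_on_well_order_on)
  then show thesis
    using assms(4) that by (rule wfE_min') (auto simp: strict_def)
qed

lemma partial_order_on_finite_has_maximal:
  assumes "finite P" "partial_order_on P le" "S \<subseteq> P" "S \<noteq> {}"
  obtains x where "x \<in> S" "\<forall>y\<in>S. \<not> strict le x y"
proof -
  have "partial_order_on P (le\<inverse>)"
    using assms(2) by simp
  then obtain x where "x \<in> S" "\<forall>y\<in>S. \<not> strict (le\<inverse>) y x"
    using partial_order_on_finite_has_minimal assms(1,3,4) by metis
  then show thesis
    using that by (fastforce simp: strict_def)
qed

lemma unique_minimal_elem_least:
  assumes "finite P" "partial_order_on P le" "\<forall>z. minimal_elem P le z \<longrightarrow> z = x0" "y \<in> P"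
  shows "(x0, y) \<in> le"
proof -
  have refl: "(y, y) \<in> le" and "trans le"
    using assms(2,4) by (auto simp: partial_order_on_def preorder_on_def refl_on_def)
  obtain z where z: "z \<in> {z \<in> P. (z, y) \<in> le}" "\<forall>w\<in>{z \<in> P. (z, y) \<in> le}. \<not> strict le w z"
    using assms(1,2) by (rule partial_order_on_finite_has_minimal[of P le "{z \<in> P. (z, y) \<in> le}"])
      (use assms(4) refl in auto)
  then have "minimal_elem P le z"
    using \<open>trans le\<close> by (auto simp: minimal_elem_def strict_def dest: transD)
  then show ?thesis
    using assms(3) z(1) by auto
qed

lemma up_beat_uplus_maximal:
  assumes "partial_order_on P le" "S \<subseteq> P" "x \<in> S" "\<forall>y\<in>S. \<not> strict le x y"
  shows "up_beat (Inl ` P \<union> Inr ` S) (uplus_less le) (Inr x) (Inl x)"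
  using assms by (auto simp: up_beat_def strict_def partial_order_on_def preorder_on_def refl_on_def)

lemma cohomology_vanishes_uplus:
  assumes "finite P" and order: "partial_order_on P le"
    and least: "x0 \<in> P" "\<forall>y\<in>P. (x0, y) \<in> le" and "S \<subseteq> P"
  shows "reduced_cohomology_vanishes TYPE('k::field) (Inl ` P \<union> Inr ` S) (uplus_less le) i"
proof -
  have "trans le" "antisym le"
    using order by (auto simp: partial_order_on_def preorder_on_def)
  then have trans: "transp_on A (uplus_less le)" for A
    using transp_on_subset[OF uplus_less_transp] by blast
  have irrefl: "irreflp_on A (uplus_less le)" for A
    using irreflp_on_subset[OF uplus_less_irreflp] by blast
  have "finite S"
    using \<open>finite P\<close> \<open>S \<subseteq> P\<close> by (rule finite_subset[rotated])
  then show ?thesis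
    using \<open>S \<subseteq> P\<close>
  proof (induction S rule: finite_remove_induct)
    case empty
    show ?case
      by (rule cohomology_vanishes_cone[where m = "Inl x0"])
        (use least \<open>antisym le\<close> in \<open>auto simp: strict_def dest: antisymD\<close>)
  next
    case (remove S)
    then obtain x where x: "x \<in> S" "\<forall>y\<in>S. \<not> strict le x y"
      using partial_order_on_finite_has_maximal[OF \<open>finite P\<close> order] by blast
    have "Inl ` P \<union> Inr ` S - {Inr x} = Inl ` P \<union> Inr ` (S - {x})"
      by auto
    moreover have "S - {x} \<subseteq> P"
      using remove.prems by blast
    ultimately have "reduced_cohomology_vanishes TYPE('k) (Inl ` P \<union> Inr ` S - {Inr x}) (uplus_less le) i"
      using remove.IH[OF x(1)] by simp
    with up_beat_uplus_maximal[OF order remove.prems x] trans irrefl show ?case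
      by (rule cohomology_vanishes_remove_up_beat)
  qed
qed

theorem lemma6p6:
  fixes P Q :: "'a set" and le :: "('a \<times> 'a) set" and x0 :: 'a
  assumes "finite P"
    and "partial_order_on P le"
    and "minimal_elem P le x0"
    and "\<forall>z. minimal_elem P le z \<longrightarrow> z = x0"
    and "poset_ideal P le Q"
    and "Q \<noteq> {}"
  shows "\<forall>i :: int. reduced_cohomology_vanishes TYPE('k::field)
           (uplus_carrier P Q - {Inr x0}) (uplus_less le) i"
proof
  fix i :: int
  have "x0 \<in> P"
    using assms(3) by (simp add: minimal_elem_def)
  moreover have "\<forall>y\<in>P. (x0, y) \<in> le"
    using unique_minimal_elem_least[OF assms(1,2,4)] by blast
  moreover have "Q - {x0} \<subseteq> P"
    using assms(5) by (auto simp: poset_ideal_def)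
  moreover have "uplus_carrier P Q - {Inr x0} = Inl ` P \<union> Inr ` (Q - {x0})"
    by (auto simp: uplus_carrier_def)
  ultimately show "reduced_cohomology_vanishes TYPE('k) (uplus_carrier P Q - {Inr x0}) (uplus_less le) i"
    using cohomology_vanishes_uplus[OF assms(1,2)] by simp
qed

end
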